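(* Fix $\epsilon>0$, a function $A:(2\pi,\infty)\to[0,\infty)$ and a function $B:\{(\beta_L,\beta_R)\in(0,\infty)^2:\beta_L\beta_R>4\pi^2\}\to[0,\infty)$. Consider the class $\mathcal{C}$ of all unitary, modular invariant 2D CFT spectra (any central charge $c\geqslant0$) with a normalizable vacuum ($n_{0,0}\geqslant1$) satisfying $$\sum_{h+\bar h\leqslant\frac c{12}+\epsilon}n_{h,\bar h}e^{-(h+\bar h)\beta}\leqslant A(\beta)\ \ (\beta>2\pi),\qquad \sum_{\min(h,\bar h)\leqslant\frac{c}{24}}n_{h,\bar h}e^{-h\beta_L-\bar h\beta_R}\leqslant B(\beta_L,\beta_R)\ \ (\beta_L\beta_R>4\pi^2).$$ Then for each $(\beta_L,\beta_R)$ with $\beta_L\beta_R\neq4\pi^2$ there is a constant $K<\infty$, independent of the theory in $\mathcal{C}$ and of $c$, such that every theory in $\mathcal{C}$ satisfies $$\left|\log Z(\beta_L,\beta_R)-\tfrac c{24}(\beta_L+\beta_R)\right|\leqslant K\ \text{ if }\beta_L\beta_R>4\pi^2,\qquad \left|\log Z(\beta_L,\beta_R)-\tfrac{\pi^2c}{6}\left(\tfrac1{\beta_L}+\tfrac1{\beta_R}\right)\right|\leqslant K\ \text{ if }\beta_L\beta_R<4\pi^2.$$ That is, as $c\to\infty$ with $\beta_L,\beta_R$ fixed, the free energy equals the thermal AdS value $\frac c{24}(\beta_L+\beta_R)+O(1)$ for $\beta_L\beta_R>4\pi^2$ and the BTZ value $\frac{\pi^2c}{6}(\frac1{\beta_L}+\frac1{\beta_R})+O(1)$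 for $\beta_L\beta_R<4\pi^2$.
   Context: A unitary, modular invariant 2D CFT spectrum consists of a real number $c\geqslant0$ (central charge) and a countable collection of pairs $(h,\bar h)$ with $h,\bar h\geqslant0$, each with multiplicity $n_{h,\bar h}\in\mathbb{N}$, such that $Z(\beta_L,\beta_R)=\sum_{h,\bar h}n_{h,\bar h}e^{-(h-\frac c{24})\beta_L-(\bar h-\frac c{24})\beta_R}$ is finite for all $\beta_L,\beta_R>0$ and $Z(\beta_L,\beta_R)=Z(4\pi^2/\beta_L,4\pi^2/\beta_R)$. (This statement is posed as a conjecture of Hartman–Keller–Stoica and is proved in the paper.) *)

theory Defs
  imports "HOL-Analysis.Analysis"
begin

text \<open>A spectrum is given by a central charge c and a multiplicity function
  n :: (h, hbar) \<Rightarrow> nat; the pairs with n (h,hbar) > 0 form the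
  (countable) collection of states.\<close>

definition cft_term :: "real \<Rightarrow> (real \<times> real \<Rightarrow> nat) \<Rightarrow> real \<Rightarrow> real \<Rightarrow> real \<times> real \<Rightarrow> real" where
  "cft_term c n bL bR p =
     real (n p) * exp (- (fst p - c / 24) * bL - (snd p - c / 24) * bR)"

definition cft_Z :: "real \<Rightarrow> (real \<times> real \<Rightarrow> nat) \<Rightarrow> real \<Rightarrow> real \<Rightarrow> real" where
  "cft_Z c n bL bR = (\<Sum>\<^sub>\<infinity>p\<in>UNIV. cft_term c n bL bR p)"

definition cft_spectrum :: "real \<Rightarrow> (real \<times> real \<Rightarrow> nat) \<Rightarrow> bool" where
  "cft_spectrum c n \<longleftrightarrow>
     c \<ge> 0 \<and>
     (\<forall>h hb. n (h, hb) \<noteq> 0 \<longrightarrow> h \<ge> 0 \<and> hb \<ge> 0) \<and>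
     countable {p. n p \<noteq> 0} \<and>
     (\<forall>bL bR. bL > 0 \<longrightarrow> bR > 0 \<longrightarrow> cft_term c n bL bR summable_on UNIV) \<and>
     (\<forall>bL bR. bL > 0 \<longrightarrow> bR > 0 \<longrightarrow>
        cft_Z c n bL bR = cft_Z c n (4 * pi\<^sup>2 / bL) (4 * pi\<^sup>2 / bR))"

end

theory Submission
  imports Defs
begin

text \<open>The vacuum gives \<open>Z(\<beta>\<^sub>L,\<beta>\<^sub>R) \<ge> e\<^bsup>c(\<beta>\<^sub>L+\<beta>\<^sub>R)/24\<^esup>\<close>, so it suffices to bound \<open>Z\<close> by a
  uniform multiple of this for \<open>\<beta>\<^sub>L\<beta>\<^sub>R > 4\<pi>\<^sup>2\<close>; the regime \<open>\<beta>\<^sub>L\<beta>\<^sub>R < 4\<pi>\<^sup>2\<close> is its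
  S-transform. States with \<open>min(h, hbar) \<le> c/24\<close> are controlled by \<open>B\<close>; the other, heavy,
  states contribute an amount decreasing in both temperatures. On the diagonal \<open>\<beta> > 2\<pi>\<close> a
  state with \<open>h + hbar > c/12 + \<epsilon>\<close> weighs at most \<open>\<delta> = e\<^bsup>-(\<beta>-4\<pi>\<^sup>2/\<beta>)\<epsilon>\<^esup> < 1\<close> times its
  weight at the dual temperature \<open>4\<pi>\<^sup>2/\<beta>\<close>, so modular invariance gives
  \<open>Z(\<beta>,\<beta>) \<le> e\<^bsup>c\<beta>/12\<^esup>A(\<beta>) + \<delta> Z(\<beta>,\<beta>)\<close>, which covers \<open>\<beta>\<^sub>L, \<beta>\<^sub>R > 2\<pi>\<close>. Elsewhere
  the heavy part at \<open>(\<beta>\<^sub>L,\<beta>\<^sub>R)\<close> is at most \<open>Z(4\<pi>\<^sup>2/r\<^sub>1, 4\<pi>\<^sup>2/r\<^sub>2) = Z(r\<^sub>1,r\<^sub>2)\<close> whenever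
  \<open>r\<^sub>i \<ge> 4\<pi>\<^sup>2/\<beta>\<^sub>i\<close>; choosing \<open>(r\<^sub>1,r\<^sub>2)\<close> with the same sum raises \<open>min(\<beta>\<^sub>L,\<beta>\<^sub>R)\<close> by a
  fixed amount while staying above \<open>\<beta>\<^sub>L\<beta>\<^sub>R = 4\<pi>\<^sup>2\<close>, so finitely many such steps reach
  \<open>\<beta>\<^sub>L, \<beta>\<^sub>R > 2\<pi>\<close>.\<close>

lemma cft_term_nonneg: "0 \<le> cft_term c n x y p"
  unfolding cft_term_def by simp

lemma cft_term_summable_on:
  assumes "cft_spectrum c n" "0 < x" "0 < y"
  shows "cft_term c n x y summable_on X"
  using assms unfolding cft_spectrum_def by (meson subset_UNIV summable_on_subset_banach)

lemma cft_Z_split: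
  assumes "cft_spectrum c n" "0 < x" "0 < y"
  shows "cft_Z c n x y = infsum (cft_term c n x y) X + infsum (cft_term c n x y) (- X)"
proof -
  have "cft_Z c n x y = infsum (cft_term c n x y) (X \<union> - X)"
    unfolding cft_Z_def by simp
  also have "\<dots> = infsum (cft_term c n x y) X + infsum (cft_term c n x y) (- X)"
    by (rule infsum_Un_disjoint) (use cft_term_summable_on[OF assms] in auto)
  finally show ?thesis .
qed

lemma infsum_cft_term_le_cft_Z:
  assumes "cft_spectrum c n" "0 < x" "0 < y"
  shows "infsum (cft_term c n x y) X \<le> cft_Z c n x y"
  unfolding cft_Z_def
  by (rule infsum_mono2) (use cft_term_summable_on[OF assms] cft_term_nonneg in auto)

lemma cft_Z_modular:
  assumes "cft_spectrum c n" "0 < x" "0 < y"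
  shows "cft_Z c n x y = cft_Z c n (4 * pi\<^sup>2 / x) (4 * pi\<^sup>2 / y)"
  using assms unfolding cft_spectrum_def by blast

lemma cft_spectrum_charge_nonneg: "cft_spectrum c n \<Longrightarrow> 0 \<le> c"
  unfolding cft_spectrum_def by simp

lemma cft_term_eq:
  "cft_term c n x y p = exp (c / 24 * (x + y)) * (real (n p) * exp (- fst p * x - snd p * y))"
proof -
  have "- (fst p - c / 24) * x - (snd p - c / 24) * y = c / 24 * (x + y) + (- fst p * x - snd p * y)"
    by (simp add: algebra_simps)
  then show ?thesis
    unfolding cft_term_def by (simp add: exp_add)
qed

lemma infsum_cft_term:
  "infsum (cft_term c n x y) X =
     exp (c / 24 * (x + y)) * (\<Sum>\<^sub>\<infinity>p\<in>X. real (n p) * exp (- fst p * x - snd p * y))"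
  unfolding cft_term_eq by (rule infsum_cmult_right')

lemma cft_term_diagonal:
  "cft_term c n \<beta> \<beta> p = real (n p) * exp (c / 12 * \<beta> - (fst p + snd p) * \<beta>)"
  unfolding cft_term_def by (simp add: algebra_simps)

lemma infsum_cft_term_diagonal:
  "infsum (cft_term c n \<beta> \<beta>) X =
     exp (c / 12 * \<beta>) * (\<Sum>\<^sub>\<infinity>p\<in>X. real (n p) * exp (- (fst p + snd p) * \<beta>))"
  unfolding infsum_cft_term by (simp add: algebra_simps)

lemma cft_Z_ge_vacuum:
  assumes "cft_spectrum c n" "0 < x" "0 < y" "1 \<le> n (0, 0)"
  shows "exp (c / 24 * (x + y)) \<le> cft_Z c n x y"
proof -
  have "exp (c / 24 * (x + y)) \<le> cft_term c n x y (0, 0)"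
    using assms(4) unfolding cft_term_eq by simp
  also have "\<dots> = infsum (cft_term c n x y) {(0, 0)}"
    by simp
  also have "\<dots> \<le> cft_Z c n x y"
    by (rule infsum_cft_term_le_cft_Z[OF assms(1-3)])
  finally show ?thesis .
qed

lemma infsum_cft_term_heavy_antimono:
  assumes "cft_spectrum c n" "0 < x'" "x' \<le> x" "0 < y'" "y' \<le> y"
  shows "infsum (cft_term c n x y) (- {p. min (fst p) (snd p) \<le> c / 24})
       \<le> infsum (cft_term c n x' y') (- {p. min (fst p) (snd p) \<le> c / 24})"
proof (rule infsum_mono)
  show "cft_term c n x y summable_on X" "cft_term c n x' y' summable_on X" for X
    using assms by (auto intro: cft_term_summable_on)
  fix p assume "p \<in> - {p. min (fst p) (snd p) \<le> c / 24}"
  then have "0 < fst p - c / 24" "0 < snd p - c / 24"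
    by auto
  with assms have "(fst p - c / 24) * x' + (snd p - c / 24) * y' \<le> (fst p - c / 24) * x + (snd p - c / 24) * y"
    by (intro add_mono mult_left_mono) auto
  then show "cft_term c n x y p \<le> cft_term c n x' y' p"
    unfolding cft_term_def by (intro mult_left_mono) (auto simp: algebra_simps)
qed

lemma dual_temperature_less:
  assumes "2 * pi < \<beta>"
  shows "4 * pi\<^sup>2 / \<beta> < \<beta>"
proof -
  have pos: "0 < \<beta>"
    using assms pi_gt_zero by linarith
  have "(2 * pi) * (2 * pi) < \<beta> * \<beta>"
    using mult_strict_mono[OF assms assms pos] pi_gt_zero by simp
  with pos show ?thesis
    by (simp add: field_simps power2_eq_square)
qed

lemma exp_dual_gap_less_1:
  assumes "0 < \<epsilon>" "2 * pi < \<beta>"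
  shows "exp (- (\<beta> - 4 * pi\<^sup>2 / \<beta>) * \<epsilon>) < 1"
  using mult_pos_pos[OF _ assms(1), of "\<beta> - 4 * pi\<^sup>2 / \<beta>"] dual_temperature_less[OF assms(2)]
  by (simp add: algebra_simps)

lemma cft_Z_diagonal_le:
  assumes sp: "cft_spectrum c n" and "0 < \<epsilon>" and \<beta>: "2 * pi < \<beta>"
    and light: "(\<Sum>\<^sub>\<infinity>p\<in>{p. fst p + snd p \<le> c / 12 + \<epsilon>}. real (n p) * exp (- (fst p + snd p) * \<beta>)) \<le> a"
  shows "cft_Z c n \<beta> \<beta> \<le> exp (c / 12 * \<beta>) * a / (1 - exp (- (\<beta> - 4 * pi\<^sup>2 / \<beta>) * \<epsilon>))"
proof -
  define \<beta>' where "\<beta>' = 4 * pi\<^sup>2 / \<beta>"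
  define \<delta> where "\<delta> = exp (- (\<beta> - \<beta>') * \<epsilon>)"
  let ?L = "{p. fst p + snd p \<le> c / 12 + \<epsilon>}"
  have "0 < \<beta>"
    using \<beta> pi_gt_zero by linarith
  then have pos: "0 < \<beta>" "0 < \<beta>'"
    unfolding \<beta>'_def by simp_all
  have gap: "0 < \<beta> - \<beta>'"
    using dual_temperature_less[OF \<beta>] unfolding \<beta>'_def by simp
  have "\<delta> < 1"
    unfolding \<delta>_def \<beta>'_def using \<open>0 < \<epsilon>\<close> \<beta> by (rule exp_dual_gap_less_1)
  have heavy_le: "cft_term c n \<beta> \<beta> p \<le> \<delta> * cft_term c n \<beta>' \<beta>' p" if "p \<in> - ?L" for p
  proof -
    from that have "\<epsilon> * (\<beta> - \<beta>') \<le> (fst p + snd p - c / 12) * (\<beta> - \<beta>')"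
      using gap by (intro mult_right_mono) auto
    then have "exp (c / 12 * \<beta> - (fst p + snd p) * \<beta>)
             \<le> \<delta> * exp (c / 12 * \<beta>' - (fst p + snd p) * \<beta>')"
      unfolding \<delta>_def exp_add[symmetric] by (simp add: algebra_simps diff_divide_distrib)
    then show ?thesis
      unfolding cft_term_diagonal mult.left_commute[of \<delta>] by (rule mult_left_mono) simp_all
  qed
  have "infsum (cft_term c n \<beta> \<beta>) (- ?L) \<le> infsum (\<lambda>p. \<delta> * cft_term c n \<beta>' \<beta>' p) (- ?L)"
    using heavy_le pos sp
    by (intro infsum_mono summable_on_cmult_right cft_term_summable_on) auto
  also have "\<dots> = \<delta> * infsum (cft_term c n \<beta>' \<beta>') (- ?L)"
    by (rule infsum_cmult_right')
  also have "\<dots> \<le> \<delta> * cft_Z c n \<beta>' \<beta>'"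
    using sp pos unfolding \<delta>_def by (intro mult_left_mono infsum_cft_term_le_cft_Z) auto
  also have "cft_Z c n \<beta>' \<beta>' = cft_Z c n \<beta> \<beta>"
    using cft_Z_modular[OF sp pos(1) pos(1)] unfolding \<beta>'_def by simp
  finally have heavy: "infsum (cft_term c n \<beta> \<beta>) (- ?L) \<le> \<delta> * cft_Z c n \<beta> \<beta>" .
  have "infsum (cft_term c n \<beta> \<beta>) ?L \<le> exp (c / 12 * \<beta>) * a"
    unfolding infsum_cft_term_diagonal using light by simp
  with heavy cft_Z_split[OF sp pos(1) pos(1), of ?L]
  have "(1 - \<delta>) * cft_Z c n \<beta> \<beta> \<le> exp (c / 12 * \<beta>) * a"
    by (simp add: algebra_simps)
  with \<open>\<delta> < 1\<close> show ?thesis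
    unfolding \<delta>_def \<beta>'_def by (simp add: field_simps)
qed

lemma cft_Z_le_of_gt_2pi:
  assumes sp: "cft_spectrum c n" and "0 < \<epsilon>" and x: "2 * pi < x" and y: "2 * pi < y"
    and light_diag: "(\<Sum>\<^sub>\<infinity>p\<in>{p. fst p + snd p \<le> c / 12 + \<epsilon>}.
                        real (n p) * exp (- (fst p + snd p) * min x y)) \<le> a"
    and light_min: "(\<Sum>\<^sub>\<infinity>p\<in>{p. min (fst p) (snd p) \<le> c / 24}.
                        real (n p) * exp (- fst p * x - snd p * y)) \<le> b"
  shows "cft_Z c n x y
           \<le> exp (c / 24 * (x + y)) * (b + a / (1 - exp (- (min x y - 4 * pi\<^sup>2 / min x y) * \<epsilon>)))"
proof -
  define m where "m = min x y"
  define C where "C = a / (1 - exp (- (m - 4 * pi\<^sup>2 / m) * \<epsilon>))"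
  let ?L = "{p. min (fst p) (snd p) \<le> c / 24}"
  have m: "2 * pi < m" "m \<le> x" "m \<le> y"
    using x y unfolding m_def by auto
  have pos: "0 < m" "0 < x" "0 < y"
    using m pi_gt_zero by linarith+
  have "0 \<le> a"
    by (rule order_trans[OF infsum_nonneg light_diag]) simp
  moreover have "exp (- (m - 4 * pi\<^sup>2 / m) * \<epsilon>) < 1"
    using \<open>0 < \<epsilon>\<close> m(1) by (rule exp_dual_gap_less_1)
  ultimately have "0 \<le> C"
    unfolding C_def by (intro divide_nonneg_pos) simp_all
  have "c / 12 * m \<le> c / 24 * (x + y)"
    using mult_left_mono[of "2 * m" "x + y" c] m cft_spectrum_charge_nonneg[OF sp] by simp
  have "infsum (cft_term c n x y) (- ?L) \<le> infsum (cft_term c n m m) (- ?L)"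
    using sp m pos by (intro infsum_cft_term_heavy_antimono) auto
  also have "\<dots> \<le> cft_Z c n m m"
    using sp pos(1) pos(1) by (rule infsum_cft_term_le_cft_Z)
  also have "\<dots> \<le> exp (c / 12 * m) * C"
    using cft_Z_diagonal_le[OF sp \<open>0 < \<epsilon>\<close> m(1) light_diag[folded m_def]] unfolding C_def by simp
  also have "\<dots> \<le> exp (c / 24 * (x + y)) * C"
    using \<open>0 \<le> C\<close> \<open>c / 12 * m \<le> c / 24 * (x + y)\<close> by (intro mult_right_mono) simp_all
  finally have heavy: "infsum (cft_term c n x y) (- ?L) \<le> exp (c / 24 * (x + y)) * C" .
  have light: "infsum (cft_term c n x y) ?L \<le> exp (c / 24 * (x + y)) * b"
    unfolding infsum_cft_term using light_min by simp
  show ?thesis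
    using cft_Z_split[OF sp pos(2,3), of ?L] heavy light
    unfolding C_def m_def by (simp add: distrib_left)
qed

lemma cft_Z_le_light_add_dual:
  assumes sp: "cft_spectrum c n" and "0 < x" "0 < y" "0 < r1" "0 < r2"
    and "4 * pi\<^sup>2 / x \<le> r1" "4 * pi\<^sup>2 / y \<le> r2"
    and light_min: "(\<Sum>\<^sub>\<infinity>p\<in>{p. min (fst p) (snd p) \<le> c / 24}.
                        real (n p) * exp (- fst p * x - snd p * y)) \<le> b"
  shows "cft_Z c n x y \<le> exp (c / 24 * (x + y)) * b + cft_Z c n r1 r2"
proof -
  let ?L = "{p. min (fst p) (snd p) \<le> c / 24}"
  have "4 * pi\<^sup>2 / r1 \<le> x" "4 * pi\<^sup>2 / r2 \<le> y"
    using assms(2-7) by (simp_all add: field_simps)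
  then have "infsum (cft_term c n x y) (- ?L)
           \<le> infsum (cft_term c n (4 * pi\<^sup>2 / r1) (4 * pi\<^sup>2 / r2)) (- ?L)"
    using sp assms(4,5) by (intro infsum_cft_term_heavy_antimono) auto
  also have "\<dots> \<le> cft_Z c n (4 * pi\<^sup>2 / r1) (4 * pi\<^sup>2 / r2)"
    using sp assms(4,5) by (intro infsum_cft_term_le_cft_Z) auto
  also have "\<dots> = cft_Z c n r1 r2"
    using cft_Z_modular[OF sp assms(4,5)] by simp
  finally have heavy: "infsum (cft_term c n x y) (- ?L) \<le> cft_Z c n r1 r2" .
  have light: "infsum (cft_term c n x y) ?L \<le> exp (c / 24 * (x + y)) * b"
    unfolding infsum_cft_term using light_min by simp
  show ?thesis
    using cft_Z_split[OF sp assms(2,3), of ?L] heavy light by simp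
qed

definition cft_class ::
    "real \<Rightarrow> (real \<Rightarrow> real) \<Rightarrow> (real \<Rightarrow> real \<Rightarrow> real) \<Rightarrow> real \<Rightarrow> (real \<times> real \<Rightarrow> nat) \<Rightarrow> bool"
  where "cft_class \<epsilon> A B c n \<longleftrightarrow>
    cft_spectrum c n \<and> n (0, 0) \<ge> 1 \<and>
    (\<forall>\<beta>. \<beta> > 2 * pi \<longrightarrow>
       (\<Sum>\<^sub>\<infinity>p\<in>{p. fst p + snd p \<le> c / 12 + \<epsilon>}.
           real (n p) * exp (- (fst p + snd p) * \<beta>)) \<le> A \<beta>) \<and>
    (\<forall>bL' bR'. bL' > 0 \<longrightarrow> bR' > 0 \<longrightarrow> bL' * bR' > 4 * pi\<^sup>2 \<longrightarrow>
       (\<Sum>\<^sub>\<infinity>p\<in>{p. min (fst p) (snd p) \<le> c / 24}.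
           real (n p) * exp (- fst p * bL' - snd p * bR')) \<le> B bL' bR')"

definition vacuum_dominated ::
    "real \<Rightarrow> (real \<Rightarrow> real) \<Rightarrow> (real \<Rightarrow> real \<Rightarrow> real) \<Rightarrow> real \<Rightarrow> real \<Rightarrow> bool"
  where "vacuum_dominated \<epsilon> A B x y \<longleftrightarrow>
    (\<exists>K. \<forall>c n. cft_class \<epsilon> A B c n \<longrightarrow> cft_Z c n x y \<le> exp (c / 24 * (x + y)) * K)"

lemma vacuum_dominated_of_gt_2pi:
  assumes "0 < \<epsilon>" "2 * pi < x" "2 * pi < y"
  shows "vacuum_dominated \<epsilon> A B x y"
  unfolding vacuum_dominated_def
proof (intro exI allI impI)
  fix c n assume member: "cft_class \<epsilon> A B c n"
  have "0 < x" "0 < y"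
    using assms pi_gt_zero by linarith+
  moreover have "4 * pi\<^sup>2 < x * y"
    using mult_strict_mono[OF assms(2,3)] \<open>0 < x\<close> pi_gt_zero by (simp add: power2_eq_square)
  moreover have "2 * pi < min x y"
    using assms by simp
  ultimately show "cft_Z c n x y \<le> exp (c / 24 * (x + y)) *
      (B x y + A (min x y) / (1 - exp (- (min x y - 4 * pi\<^sup>2 / min x y) * \<epsilon>)))"
    using member unfolding cft_class_def by (intro cft_Z_le_of_gt_2pi[OF _ assms]) auto
qed

lemma vacuum_dominated_modular_step:
  assumes "0 < x" "0 < y" "4 * pi\<^sup>2 < x * y" "0 < r1" "0 < r2"
    and "4 * pi\<^sup>2 / x \<le> r1" "4 * pi\<^sup>2 / y \<le> r2" "r1 + r2 \<le> x + y"
    and "vacuum_dominated \<epsilon> A B r1 r2"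
  shows "vacuum_dominated \<epsilon> A B x y"
proof -
  obtain K where K: "\<And>c n. cft_class \<epsilon> A B c n \<Longrightarrow> cft_Z c n r1 r2 \<le> exp (c / 24 * (r1 + r2)) * K"
    using assms(9) unfolding vacuum_dominated_def by blast
  have "cft_Z c n x y \<le> exp (c / 24 * (x + y)) * (B x y + max K 0)"
    if member: "cft_class \<epsilon> A B c n" for c n
  proof -
    have "0 \<le> c"
      using member cft_spectrum_charge_nonneg unfolding cft_class_def by blast
    have "cft_Z c n x y \<le> exp (c / 24 * (x + y)) * B x y + cft_Z c n r1 r2"
      using member assms(1-7) unfolding cft_class_def by (intro cft_Z_le_light_add_dual) auto
    also have "cft_Z c n r1 r2 \<le> exp (c / 24 * (r1 + r2)) * max K 0"
      using K[OF member] by (meson max.cobounded1 mult_left_mono order_trans exp_ge_zero)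
    also have "\<dots> \<le> exp (c / 24 * (x + y)) * max K 0"
      using \<open>0 \<le> c\<close> assms(8) by (intro mult_right_mono) (auto simp: mult_left_mono)
    finally show ?thesis
      by (simp add: distrib_left)
  qed
  then show ?thesis
    unfolding vacuum_dominated_def by blast
qed

text \<open>\<open>r\<^sub>1\<close> lies just above the S-dual \<open>4\<pi>\<^sup>2/x \<ge> 2\<pi> \<ge> x\<close>, and \<open>r\<^sub>2\<close> keeps the sum \<open>x + y\<close>;
  then \<open>r\<^sub>1 r\<^sub>2 - xy = (r\<^sub>1 - x)(r\<^sub>2 - x) \<ge> 0\<close>.\<close>

lemma modular_dual_pair_of_le_2pi:
  fixes x y P :: real
  assumes "0 < x" "x \<le> 2 * pi" "4 * pi\<^sup>2 < P" "P \<le> x * y"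
  defines "d \<equiv> (P - 4 * pi\<^sup>2) / (4 * pi)"
  obtains r1 r2 where "P \<le> r1 * r2" "x + d \<le> min r1 r2"
    "4 * pi\<^sup>2 / x \<le> r1" "4 * pi\<^sup>2 / y \<le> r2" "r1 + r2 = x + y"
proof -
  define a where "a = 4 * pi\<^sup>2 / x"
  define r1 where "r1 = a + d"
  define r2 where "r2 = x + y - r1"
  have "0 < d"
    using assms(3) unfolding d_def by simp
  have "0 < 4 * pi\<^sup>2"
    by simp
  with assms(3,4) have "0 < x * y"
    by linarith
  then have "0 < y"
    using assms(1) zero_less_mult_pos by blast
  have "2 * pi * x \<le> 2 * pi * (2 * pi)"
    using assms(2) by (intro mult_left_mono) auto
  then have "2 * pi \<le> a"
    unfolding a_def using assms(1) by (simp add: field_simps power2_eq_square)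
  have "2 * d = (P - 4 * pi\<^sup>2) / (2 * pi)"
    unfolding d_def by (simp add: field_simps)
  also have "\<dots> \<le> (P - 4 * pi\<^sup>2) / x"
    using assms(1-3) by (intro divide_left_mono) auto
  also have "\<dots> \<le> (x * y - 4 * pi\<^sup>2) / x"
    using assms(1,4) by (intro divide_right_mono) auto
  also have "\<dots> = y - a"
    unfolding a_def using assms(1) by (simp add: field_simps)
  finally have "2 * d \<le> y - a" .
  then have "x + d \<le> r1" "x + d \<le> r2"
    unfolding r1_def r2_def using assms(2) \<open>2 * pi \<le> a\<close> by linarith+
  have "r1 * r2 = x * y + (r1 - x) * (r2 - x)"
    unfolding r2_def by (simp add: algebra_simps)
  moreover have "0 \<le> (r1 - x) * (r2 - x)"
    using \<open>x + d \<le> r1\<close> \<open>x + d \<le> r2\<close> \<open>0 < d\<close> by simp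
  ultimately have "P \<le> r1 * r2"
    using assms(4) by linarith
  moreover have "x + d \<le> min r1 r2"
    using \<open>x + d \<le> r1\<close> \<open>x + d \<le> r2\<close> by simp
  moreover have "4 * pi\<^sup>2 / x \<le> r1"
    unfolding r1_def a_def using \<open>0 < d\<close> by simp
  moreover have "4 * pi\<^sup>2 / y \<le> x"
    using assms(3,4) \<open>0 < y\<close> by (simp add: field_simps)
  then have "4 * pi\<^sup>2 / y \<le> r2"
    using \<open>x + d \<le> r2\<close> \<open>0 < d\<close> by linarith
  moreover have "r1 + r2 = x + y"
    unfolding r2_def by simp
  ultimately show thesis
    by (rule that)
qed

lemma modular_dual_pair:
  fixes x y P :: real
  assumes "0 < x" "0 < y" "min x y \<le> 2 * pi" "4 * pi\<^sup>2 < P" "P \<le> x * y"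
  defines "d \<equiv> (P - 4 * pi\<^sup>2) / (4 * pi)"
  obtains r1 r2 where "P \<le> r1 * r2" "min x y + d \<le> min r1 r2"
    "4 * pi\<^sup>2 / x \<le> r1" "4 * pi\<^sup>2 / y \<le> r2" "r1 + r2 = x + y"
proof (cases "x \<le> 2 * pi")
  case True
  obtain r1 r2 where "P \<le> r1 * r2" "x + d \<le> min r1 r2"
      "4 * pi\<^sup>2 / x \<le> r1" "4 * pi\<^sup>2 / y \<le> r2" "r1 + r2 = x + y"
    using modular_dual_pair_of_le_2pi[OF assms(1) True assms(4,5)] unfolding d_def .
  moreover have "min x y + d \<le> x + d"
    by simp
  ultimately show thesis
    by (intro that[of r1 r2]) auto
next
  case False
  with assms(3) have "y \<le> 2 * pi"
    by linarith
  moreover have "P \<le> y * x"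
    using assms(5) by (simp add: mult.commute)
  ultimately obtain r2 r1 where "P \<le> r2 * r1" "y + d \<le> min r2 r1"
      "4 * pi\<^sup>2 / y \<le> r2" "4 * pi\<^sup>2 / x \<le> r1" "r2 + r1 = y + x"
    using modular_dual_pair_of_le_2pi[OF assms(2) _ assms(4)] unfolding d_def by blast
  moreover have "min x y + d \<le> y + d"
    by simp
  ultimately show thesis
    by (intro that[of r1 r2]) (auto simp: ac_simps)
qed

lemma vacuum_dominated_of_min_gt:
  assumes "0 < \<epsilon>" "4 * pi\<^sup>2 < P"
  defines "d \<equiv> (P - 4 * pi\<^sup>2) / (4 * pi)"
  shows "0 < x \<Longrightarrow> 0 < y \<Longrightarrow> P \<le> x * y \<Longrightarrow> 2 * pi < min x y + real N * d \<Longrightarrow>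
    vacuum_dominated \<epsilon> A B x y"
proof (induction N arbitrary: x y)
  case 0
  then show ?case
    using vacuum_dominated_of_gt_2pi[OF assms(1)] by simp
next
  case (Suc N)
  show ?case
  proof (cases "2 * pi < min x y")
    case True
    then show ?thesis
      using vacuum_dominated_of_gt_2pi[OF assms(1)] by simp
  next
    case False
    then have "min x y \<le> 2 * pi"
      by (simp only: not_less)
    then obtain r1 r2 where r: "P \<le> r1 * r2" "min x y + d \<le> min r1 r2"
        "4 * pi\<^sup>2 / x \<le> r1" "4 * pi\<^sup>2 / y \<le> r2" "r1 + r2 = x + y"
      by (rule modular_dual_pair[OF Suc.prems(1,2) _ assms(2) Suc.prems(3), folded d_def])
    have "0 < 4 * pi\<^sup>2 / x" "0 < 4 * pi\<^sup>2 / y"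
      using Suc.prems by simp_all
    then have "0 < r1" "0 < r2"
      using r by linarith+
    have "2 * pi < min r1 r2 + real N * d"
      using r(2) Suc.prems(4) unfolding of_nat_Suc distrib_right by linarith
    then have "vacuum_dominated \<epsilon> A B r1 r2"
      by (rule Suc.IH[OF \<open>0 < r1\<close> \<open>0 < r2\<close> r(1)])
    then show ?thesis
      using Suc.prems(1-3) assms(2) r(3-5) \<open>0 < r1\<close> \<open>0 < r2\<close>
      by (intro vacuum_dominated_modular_step[of x y r1 r2]) auto
  qed
qed

lemma vacuum_dominated_of_product_gt:
  assumes "0 < \<epsilon>" "0 < x" "0 < y" "4 * pi\<^sup>2 < x * y"
  shows "vacuum_dominated \<epsilon> A B x y"
proof -
  define d where "d = (x * y - 4 * pi\<^sup>2) / (4 * pi)"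
  have "0 < d"
    using assms(4) unfolding d_def by simp
  define N where "N = nat \<lceil>2 * pi / d\<rceil>"
  have "2 * pi / d \<le> real N"
    unfolding N_def by (rule real_nat_ceiling_ge)
  then have "2 * pi \<le> real N * d"
    using \<open>0 < d\<close> by (simp add: pos_divide_le_eq)
  then have "2 * pi < min x y + real N * d"
    using assms(2,3) by simp
  then show ?thesis
    using vacuum_dominated_of_min_gt[OF assms(1,4)] assms(2,3) unfolding d_def by simp
qed

lemma ln_cft_Z_thermal_AdS:
  assumes "0 < \<epsilon>" "0 < x" "0 < y" "4 * pi\<^sup>2 < x * y"
  shows "\<exists>K. \<forall>c n. cft_class \<epsilon> A B c n \<longrightarrow> \<bar>ln (cft_Z c n x y) - c / 24 * (x + y)\<bar> \<le> K"
proof -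
  obtain K where K: "\<And>c n. cft_class \<epsilon> A B c n \<Longrightarrow> cft_Z c n x y \<le> exp (c / 24 * (x + y)) * K"
    using vacuum_dominated_of_product_gt[OF assms] unfolding vacuum_dominated_def by blast
  have "\<bar>ln (cft_Z c n x y) - c / 24 * (x + y)\<bar> \<le> ln (max K 1)"
    if member: "cft_class \<epsilon> A B c n" for c n
  proof -
    have lower: "exp (c / 24 * (x + y)) \<le> cft_Z c n x y"
      using member assms(2,3) unfolding cft_class_def by (intro cft_Z_ge_vacuum) auto
    then have "0 < cft_Z c n x y"
      by (rule less_le_trans[OF exp_gt_zero])
    have upper: "cft_Z c n x y \<le> exp (c / 24 * (x + y)) * max K 1"
      using K[OF member] by (meson exp_ge_zero max.cobounded1 mult_left_mono order_trans)
    have "ln (cft_Z c n x y) \<le> ln (exp (c / 24 * (x + y)) * max K 1)"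
      using upper \<open>0 < cft_Z c n x y\<close> by simp
    also have "\<dots> = c / 24 * (x + y) + ln (max K 1)"
      by (simp add: ln_mult)
    finally have "ln (cft_Z c n x y) \<le> c / 24 * (x + y) + ln (max K 1)" .
    moreover have "c / 24 * (x + y) \<le> ln (cft_Z c n x y)"
      using ln_ge_iff[OF \<open>0 < cft_Z c n x y\<close>] lower by blast
    ultimately show ?thesis
      by simp
  qed
  then show ?thesis
    by blast
qed

lemma ln_cft_Z_BTZ:
  assumes "0 < \<epsilon>" "0 < x" "0 < y" "x * y < 4 * pi\<^sup>2"
  shows "\<exists>K. \<forall>c n. cft_class \<epsilon> A B c n \<longrightarrow>
           \<bar>ln (cft_Z c n x y) - pi\<^sup>2 * c / 6 * (1 / x + 1 / y)\<bar> \<le> K"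
proof -
  define x' where "x' = 4 * pi\<^sup>2 / x"
  define y' where "y' = 4 * pi\<^sup>2 / y"
  have "0 < x'" "0 < y'"
    unfolding x'_def y'_def using assms(2,3) by simp_all
  have "4 * pi\<^sup>2 * (x * y) < 4 * pi\<^sup>2 * (4 * pi\<^sup>2)"
    using mult_strict_left_mono[OF assms(4), of "4 * pi\<^sup>2"] by simp
  then have "4 * pi\<^sup>2 < x' * y'"
    unfolding x'_def y'_def using assms(2,3) by (simp add: field_simps power2_eq_square)
  then obtain K where K: "\<And>c n. cft_class \<epsilon> A B c n \<Longrightarrow> \<bar>ln (cft_Z c n x' y') - c / 24 * (x' + y')\<bar> \<le> K"
    using ln_cft_Z_thermal_AdS[OF assms(1) \<open>0 < x'\<close> \<open>0 < y'\<close>] by blast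
  have "cft_Z c n x y = cft_Z c n x' y'" if "cft_class \<epsilon> A B c n" for c n
    using that assms(2,3) unfolding cft_class_def x'_def y'_def by (intro cft_Z_modular) auto
  moreover have "c / 24 * (x' + y') = pi\<^sup>2 * c / 6 * (1 / x + 1 / y)" for c
    unfolding x'_def y'_def by (simp add: field_simps)
  ultimately show ?thesis
    using K by metis
qed

theorem mainTheorem6:
  fixes \<epsilon> :: real and A :: "real \<Rightarrow> real" and B :: "real \<Rightarrow> real \<Rightarrow> real"
  assumes "\<epsilon> > 0"
    and "\<forall>\<beta>. \<beta> > 2 * pi \<longrightarrow> A \<beta> \<ge> 0"
    and "\<forall>bL bR. bL > 0 \<longrightarrow> bR > 0 \<longrightarrow> bL * bR > 4 * pi\<^sup>2 \<longrightarrow> B bL bR \<ge> 0"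
  shows "\<forall>bL bR. bL > 0 \<longrightarrow> bR > 0 \<longrightarrow> bL * bR \<noteq> 4 * pi\<^sup>2 \<longrightarrow>
    (\<exists>K::real. \<forall>(c::real) (n :: real \<times> real \<Rightarrow> nat).
       cft_spectrum c n \<and> n (0, 0) \<ge> 1 \<and>
       (\<forall>\<beta>. \<beta> > 2 * pi \<longrightarrow>
          (\<Sum>\<^sub>\<infinity>p\<in>{p. fst p + snd p \<le> c / 12 + \<epsilon>}.
              real (n p) * exp (- (fst p + snd p) * \<beta>)) \<le> A \<beta>) \<and>
       (\<forall>bL' bR'. bL' > 0 \<longrightarrow> bR' > 0 \<longrightarrow> bL' * bR' > 4 * pi\<^sup>2 \<longrightarrow>
          (\<Sum>\<^sub>\<infinity>p\<in>{p. min (fst p) (snd p) \<le> c / 24}.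
              real (n p) * exp (- fst p * bL' - snd p * bR')) \<le> B bL' bR')
       \<longrightarrow>
       (bL * bR > 4 * pi\<^sup>2 \<longrightarrow>
          \<bar>ln (cft_Z c n bL bR) - c / 24 * (bL + bR)\<bar> \<le> K) \<and>
       (bL * bR < 4 * pi\<^sup>2 \<longrightarrow>
          \<bar>ln (cft_Z c n bL bR) - pi\<^sup>2 * c / 6 * (1 / bL + 1 / bR)\<bar> \<le> K))"
  unfolding cft_class_def[symmetric]
proof (intro allI impI)
  fix x y :: real
  assume "0 < x" "0 < y" "x * y \<noteq> 4 * pi\<^sup>2"
  then consider (AdS) "4 * pi\<^sup>2 < x * y" | (BTZ) "x * y < 4 * pi\<^sup>2"
    by linarith
  then show "\<exists>K. \<forall>c n. cft_class \<epsilon> A B c n \<longrightarrow>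
      (4 * pi\<^sup>2 < x * y \<longrightarrow> \<bar>ln (cft_Z c n x y) - c / 24 * (x + y)\<bar> \<le> K) \<and>
      (x * y < 4 * pi\<^sup>2 \<longrightarrow> \<bar>ln (cft_Z c n x y) - pi\<^sup>2 * c / 6 * (1 / x + 1 / y)\<bar> \<le> K)"
  proof cases
    case AdS
    then show ?thesis
      using ln_cft_Z_thermal_AdS[OF assms(1) \<open>0 < x\<close> \<open>0 < y\<close>] by auto
  next
    case BTZ
    then show ?thesis
      using ln_cft_Z_BTZ[OF assms(1) \<open>0 < x\<close> \<open>0 < y\<close>] by auto
  qed
qed

end
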